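(* Let $p$ be a graph parameter such that $p(G\uplus H)=\max(p(G),p(H))$ for all graphs $G,H$ (where $\uplus$ is disjoint union). Let $\mathcal{A}$ be a class of structures of bounded arity $r$ such that the class of Gaifman graphs of structures in $\mathcal{A}$ is fractionally-$p$-fragile. Then $\mathcal{A}$ is $p$-pliable.
   Context: A $\sigma$-structure $\mathbb{A}$ is a finite domain $A$ with functions $f^{\mathbb{A}}\colon A^{\mathrm{ar}(f)}\to\mathbb{Q}_{\ge0}$, $f\in\sigma$; bounded arity $r$ means $\mathrm{ar}(f)\le r$ for all symbols. $\mathrm{opt}(\mathbb{A},\mathbb{B})=\max_{h\colon A\to B}\sum_{f}\sum_{\bar x}f^{\mathbb{A}}(\bar x)f^{\mathbb{B}}(h(\bar x))$ over all maps; $d_{\mathrm{opt}}(\mathbb{A},\mathbb{B})=\sup_{\mathbb{C}}|\ln\mathrm{opt}(\mathbb{A},\mathbb{C})-\ln\mathrm{opt}(\mathbb{B},\mathbb{C})|$ over $\sigma$-structures $\mathbb{C}$ ($\ln0=-\infty$, $|\ln0-\ln0|=0$). The Gaifman graph of $\mathbb{A}$ has vertex set $A$, with distinct $u,v$ adjacent iff they occur together in a tuple $\bar x$ with $f^{\mathbb{A}}(\bar x)>0$; $p(\mathbb{A})$ is $p$ of the Gaifman graph. $\mathcal{A}$ is $p$-pliable if for every $\varepsilon>0$ there is $k$ such that every $\mathbb{A}\in\mathcal{A}$ (signature $\sigma$) has a $\sigma$-structure $\mathbb{B}$ with $p(\mathbb{B})\le k$ and $d_{\mathrm{opt}}(\mathbb{A},\mathbb{B})\le\varepsilon$.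 A class of graphs $\mathcal{G}$ is fractionally-$p$-fragile if for every $\varepsilon>0$ there is $k$ such that every $G\in\mathcal{G}$ has a probability distribution $\pi$ over sets $X\subseteq V(G)$ with $p(G-X)\le k$ such that $\Pr_{X\sim\pi}[v\in X]\le\varepsilon$ for every $v\in V(G)$. *)

theory Defs
  imports "HOL-Probability.Probability_Mass_Function" "HOL-Library.Extended_Real" "HOL-Library.FuncSet"
begin

text \<open>Finite simple graphs on natural-number vertices: a vertex set and a set of
  edges, each edge being a 2-element set of vertices.\<close>
type_synonym graph = "nat set \<times> nat set set"

definition wf_graph :: "graph \<Rightarrow> bool" where
  "wf_graph G \<longleftrightarrow> finite (fst G) \<and>
     (\<forall>e\<in>snd G. \<exists>u v. u \<in> fst G \<and> v \<in> fst G \<and> u \<noteq> v \<and> e = {u, v})"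

definition graph_iso :: "graph \<Rightarrow> graph \<Rightarrow> bool" where
  "graph_iso G H \<longleftrightarrow> (\<exists>f. bij_betw f (fst G) (fst H) \<and>
     (\<forall>u\<in>fst G. \<forall>v\<in>fst G. {u, v} \<in> snd G \<longleftrightarrow> {f u, f v} \<in> snd H))"

definition disj_union :: "graph \<Rightarrow> graph \<Rightarrow> graph" where
  "disj_union G H =
     ((\<lambda>v. 2 * v) ` fst G \<union> (\<lambda>v. 2 * v + 1) ` fst H,
      (\<lambda>e. (\<lambda>v. 2 * v) ` e) ` snd G \<union> (\<lambda>e. (\<lambda>v. 2 * v + 1) ` e) ` snd H)"

definition del_vertices :: "graph \<Rightarrow> nat set \<Rightarrow> graph" where
  "del_vertices G X = (fst G - X, {e \<in> snd G. e \<inter> X = {}})"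

definition frac_fragile :: "(graph \<Rightarrow> nat) \<Rightarrow> graph set \<Rightarrow> bool" where
  "frac_fragile p \<G> \<longleftrightarrow>
     (\<forall>\<epsilon>::real. \<epsilon> > 0 \<longrightarrow> (\<exists>k::nat. \<forall>G\<in>\<G>. \<exists>\<pi> :: nat set pmf.
        (\<forall>X\<in>set_pmf \<pi>. X \<subseteq> fst G \<and> p (del_vertices G X) \<le> k) \<and>
        (\<forall>v\<in>fst G. measure_pmf.prob \<pi> {X. v \<in> X} \<le> \<epsilon>)))"

text \<open>A valued structure: its signature (symbols and arities), a domain, and the
  interpretation of each symbol as a function from tuples (lists of length
  the arity) to nonnegative rationals. Only tuples over the domain of the right
  length matter.\<close>
record 's vstruct =
  syms :: "'s set"
  ar :: "'s \<Rightarrow> nat"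
  sdom :: "nat set"
  sfn :: "'s \<Rightarrow> nat list \<Rightarrow> rat"

definition tuples :: "nat set \<Rightarrow> nat \<Rightarrow> nat list set" where
  "tuples D n = {xs. set xs \<subseteq> D \<and> length xs = n}"

definition is_struct :: "('s, 'b) vstruct_scheme \<Rightarrow> bool" where
  "is_struct A \<longleftrightarrow> finite (syms A) \<and> finite (sdom A) \<and> sdom A \<noteq> {} \<and>
     (\<forall>f\<in>syms A. \<forall>xs\<in>tuples (sdom A) (ar A f). sfn A f xs \<ge> 0)"

definition same_sig :: "'s vstruct \<Rightarrow> 's vstruct \<Rightarrow> bool" where
  "same_sig A B \<longleftrightarrow> syms A = syms B \<and> (\<forall>f\<in>syms A. ar A f = ar B f)"

definition opt :: "'s vstruct \<Rightarrow> 's vstruct \<Rightarrow> real" where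
  "opt A C = Max ((\<lambda>h. \<Sum>f\<in>syms A. \<Sum>xs\<in>tuples (sdom A) (ar A f).
        real_of_rat (sfn A f xs * sfn C f (map h xs))) ` (sdom A \<rightarrow>\<^sub>E sdom C))"

text \<open>|ln a - ln b| with ln 0 = -infinity and |ln 0 - ln 0| = 0.\<close>
definition ln_dist :: "real \<Rightarrow> real \<Rightarrow> ereal" where
  "ln_dist a b = (if a = 0 \<and> b = 0 then 0
                  else if a = 0 \<or> b = 0 then \<infinity>
                  else ereal \<bar>ln a - ln b\<bar>)"

definition d_opt :: "'s vstruct \<Rightarrow> 's vstruct \<Rightarrow> ereal" where
  "d_opt A B = Sup {ln_dist (opt A C) (opt B C) | C. is_struct C \<and> same_sig C A}"

definition gaifman :: "'s vstruct \<Rightarrow> graph" where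
  "gaifman A = (sdom A, {{u, v} | u v. u \<noteq> v \<and>
      (\<exists>f\<in>syms A. \<exists>xs\<in>tuples (sdom A) (ar A f). sfn A f xs > 0 \<and> u \<in> set xs \<and> v \<in> set xs)})"

definition pliable :: "(graph \<Rightarrow> nat) \<Rightarrow> 's vstruct set \<Rightarrow> bool" where
  "pliable p \<A> \<longleftrightarrow>
     (\<forall>\<epsilon>::real. \<epsilon> > 0 \<longrightarrow> (\<exists>k::nat. \<forall>A\<in>\<A>. \<exists>B. is_struct B \<and> same_sig B A \<and>
        p (gaifman B) \<le> k \<and> d_opt A B \<le> ereal \<epsilon>))"

end

theory Submission
  imports Defs "HOL-Library.Nat_Bijection"
begin

text \<open>Fix \<open>\<epsilon>\<close> and let \<open>\<pi>\<close> be a fragility distribution for the Gaifman graph \<open>G\<^sub>A\<close> of \<open>A\<close>: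
  \<open>p (G\<^sub>A - X) \<le> k\<close> on its support and every vertex is deleted with probability at most \<open>e\<close>.
  Let \<open>B\<close> be the disjoint union of copies of \<open>A - X\<close>, \<open>X\<close> ranging over the support, copy \<open>X\<close>
  weighted by a rational upper approximation \<open>c\<^sub>X\<close> of \<open>\<pi>(X)\<close>. By a union bound every tuple of
  \<open>A\<close> survives in copies of total weight at least \<open>1 - r e\<close>, while the total weight is close to
  \<open>1\<close>; comparing assignments of \<open>A\<close> and of \<open>B\<close> copy by copy gives
  \<open>(1 - r e) opt(A,C) \<le> opt(B,C) \<le> (1 + \<epsilon>) opt(A,C)\<close> for every \<open>C\<close>, and \<open>e\<close> is chosen with
  \<open>(1 + \<epsilon>) (1 - r e) \<ge> 1\<close>, so \<open>d_opt(A,B) \<le> \<epsilon>\<close>.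
  The Gaifman graph of \<open>B\<close> is the disjoint union of copies of the graphs \<open>G\<^sub>A - X\<close>, so
  invariance of \<open>p\<close> under isomorphism and \<open>p(G \<uplus> H) = max (p G) (p H)\<close> give \<open>p(G\<^sub>B) \<le> k\<close>.\<close>

definition graph_image :: "(nat \<Rightarrow> nat) \<Rightarrow> graph \<Rightarrow> graph" where
  "graph_image f G = (f ` fst G, (\<lambda>e. f ` e) ` snd G)"

definition graph_union :: "graph \<Rightarrow> graph \<Rightarrow> graph" where
  "graph_union G H = (fst G \<union> fst H, snd G \<union> snd H)"

definition graph_Union :: "'i set \<Rightarrow> ('i \<Rightarrow> graph) \<Rightarrow> graph" where
  "graph_Union I G = (\<Union>i\<in>I. fst (G i), \<Union>i\<in>I. snd (G i))"

lemma wf_graph_edge_subset: "wf_graph G \<Longrightarrow> e \<in> snd G \<Longrightarrow> e \<subseteq> fst G"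
  unfolding wf_graph_def by force

lemma wf_graph_graph_image:
  assumes G: "wf_graph G" and f: "inj_on f (fst G)"
  shows "wf_graph (graph_image f G)"
  unfolding wf_graph_def graph_image_def fst_conv snd_conv
proof (intro conjI ballI)
  show "finite (f ` fst G)" using G by (simp add: wf_graph_def)
  fix e' assume "e' \<in> (\<lambda>e. f ` e) ` snd G"
  then obtain e where "e \<in> snd G" and e': "e' = f ` e" by blast
  then obtain u v where uv: "u \<in> fst G" "v \<in> fst G" "u \<noteq> v" "e = {u, v}"
    using G unfolding wf_graph_def by blast
  show "\<exists>u v. u \<in> f ` fst G \<and> v \<in> f ` fst G \<and> u \<noteq> v \<and> e' = {u, v}"
    using uv e' inj_onD[OF f] by (intro exI[of _ "f u"] exI[of _ "f v"]) auto
qed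

lemma wf_graph_graph_Union:
  assumes I: "finite I" and G: "\<And>i. i \<in> I \<Longrightarrow> wf_graph (G i)"
  shows "wf_graph (graph_Union I G)"
  unfolding wf_graph_def graph_Union_def fst_conv snd_conv
proof (intro conjI ballI)
  show "finite (\<Union>i\<in>I. fst (G i))" using I G by (simp add: wf_graph_def)
  fix e assume "e \<in> (\<Union>i\<in>I. snd (G i))"
  then obtain i where i: "i \<in> I" "e \<in> snd (G i)" by blast
  then obtain u v where "u \<in> fst (G i)" "v \<in> fst (G i)" "u \<noteq> v" "e = {u, v}"
    using G unfolding wf_graph_def by blast
  then show "\<exists>u v. u \<in> (\<Union>i\<in>I. fst (G i)) \<and> v \<in> (\<Union>i\<in>I. fst (G i)) \<and> u \<noteq> v \<and> e = {u, v}"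
    using i(1) by blast
qed

lemma wf_graph_graph_union: "wf_graph G \<Longrightarrow> wf_graph H \<Longrightarrow> wf_graph (graph_union G H)"
  using wf_graph_graph_Union[of "{True, False}" "\<lambda>b. if b then G else H"]
  by (simp add: graph_Union_def graph_union_def)

lemma wf_graph_del_vertices:
  assumes G: "wf_graph G"
  shows "wf_graph (del_vertices G X)"
  unfolding wf_graph_def del_vertices_def fst_conv snd_conv
proof (intro conjI ballI)
  show "finite (fst G - X)" using G by (simp add: wf_graph_def)
  fix e assume e: "e \<in> {e \<in> snd G. e \<inter> X = {}}"
  then obtain u v where "u \<in> fst G" "v \<in> fst G" "u \<noteq> v" "e = {u, v}"
    using G unfolding wf_graph_def by blast
  then show "\<exists>u v. u \<in> fst G - X \<and> v \<in> fst G - X \<and> u \<noteq> v \<and> e = {u, v}"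
    using e by blast
qed

lemma wf_graph_gaifman:
  assumes "finite (sdom A)"
  shows "wf_graph (gaifman A)"
  unfolding wf_graph_def
proof (intro conjI ballI)
  show "finite (fst (gaifman A))" using assms by (simp add: gaifman_def)
  fix e assume "e \<in> snd (gaifman A)"
  then obtain u v f xs where "e = {u, v}" "u \<noteq> v" "xs \<in> tuples (sdom A) (ar A f)"
    "u \<in> set xs" "v \<in> set xs"
    unfolding gaifman_def by auto
  then show "\<exists>u v. u \<in> fst (gaifman A) \<and> v \<in> fst (gaifman A) \<and> u \<noteq> v \<and> e = {u, v}"
    unfolding gaifman_def tuples_def by auto
qed

lemma disj_union_eq_graph_union:
  "disj_union G H = graph_union (graph_image (\<lambda>v. 2 * v) G) (graph_image (\<lambda>v. 2 * v + 1) H)"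
  by (simp add: disj_union_def graph_union_def graph_image_def)

lemma wf_graph_disj_union: "wf_graph G \<Longrightarrow> wf_graph H \<Longrightarrow> wf_graph (disj_union G H)"
  unfolding disj_union_eq_graph_union
  by (intro wf_graph_graph_union wf_graph_graph_image) (auto intro: inj_onI)

lemma graph_iso_graph_image:
  assumes G: "wf_graph G" and f: "inj_on f (fst G)"
  shows "graph_iso G (graph_image f G)"
  unfolding graph_iso_def
proof (intro exI conjI ballI)
  show "bij_betw f (fst G) (fst (graph_image f G))"
    using f by (simp add: bij_betw_def graph_image_def)
  fix u v assume u: "u \<in> fst G" and v: "v \<in> fst G"
  show "{u, v} \<in> snd G \<longleftrightarrow> {f u, f v} \<in> snd (graph_image f G)"
  proof
    assume "{u, v} \<in> snd G"
    then show "{f u, f v} \<in> snd (graph_image f G)"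
      unfolding graph_image_def by (auto intro: rev_image_eqI[of "{u, v}"])
  next
    assume "{f u, f v} \<in> snd (graph_image f G)"
    then obtain e where e: "e \<in> snd G" "f ` {u, v} = f ` e" by (auto simp: graph_image_def)
    have "{u, v} \<subseteq> fst G" "e \<subseteq> fst G" using u v wf_graph_edge_subset[OF G e(1)] by auto
    then have "{u, v} = e" using e(2) inj_on_image_eq_iff[OF f] by blast
    with e(1) show "{u, v} \<in> snd G" by simp
  qed
qed

lemma graph_image_halve_disj_union:
  "graph_image (\<lambda>w. w div 2) (disj_union G H) = graph_union G H"
  by (simp add: disj_union_eq_graph_union graph_union_def graph_image_def image_Un image_image)

locale max_on_disj_union =
  fixes p :: "graph \<Rightarrow> nat"
  assumes iso_invariant: "\<And>G H. wf_graph G \<Longrightarrow> wf_graph H \<Longrightarrow> graph_iso G H \<Longrightarrow> p G = p H"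
    and max_disj_union: "\<And>G H. wf_graph G \<Longrightarrow> wf_graph H \<Longrightarrow> p (disj_union G H) = max (p G) (p H)"
begin

lemma graph_image_invariant:
  "wf_graph G \<Longrightarrow> inj_on f (fst G) \<Longrightarrow> p (graph_image f G) = p G"
  using iso_invariant graph_iso_graph_image wf_graph_graph_image by metis

lemma max_graph_union:
  assumes G: "wf_graph G" and H: "wf_graph H" and disjoint: "fst G \<inter> fst H = {}"
  shows "p (graph_union G H) = max (p G) (p H)"
proof -
  have "inj_on (\<lambda>w. w div 2) (fst (disj_union G H))"
  proof (rule inj_onI)
    fix x y :: nat
    assume x: "x \<in> fst (disj_union G H)" and y: "y \<in> fst (disj_union G H)"
      and eq: "x div 2 = y div 2"
    have "x div 2 \<in> fst G \<longleftrightarrow> even x" "y div 2 \<in> fst G \<longleftrightarrow> even y"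
      using x y disjoint by (auto simp: disj_union_def)
    then have "x mod 2 = y mod 2" using eq by (simp add: mod2_eq_if)
    then show "x = y" using eq by (metis div_mult_mod_eq)
  qed
  then have "p (graph_image (\<lambda>w. w div 2) (disj_union G H)) = p (disj_union G H)"
    by (rule graph_image_invariant[OF wf_graph_disj_union[OF G H]])
  then have "p (graph_union G H) = p (disj_union G H)"
    by (simp only: graph_image_halve_disj_union)
  also have "\<dots> = max (p G) (p H)" by (rule max_disj_union[OF G H])
  finally show ?thesis .
qed

lemma graph_Union_le:
  assumes "finite I" "I \<noteq> {}" and "\<And>i. i \<in> I \<Longrightarrow> wf_graph (G i) \<and> p (G i) \<le> k"
    and "disjoint_family_on (\<lambda>i. fst (G i)) I"
  shows "p (graph_Union I G) \<le> k"
  using assms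
proof (induction I rule: finite_ne_induct)
  case (singleton i)
  then show ?case by (simp add: graph_Union_def)
next
  case (insert i J)
  have wf_J: "wf_graph (graph_Union J G)" and wf_i: "wf_graph (G i)"
    using insert.hyps(1) insert.prems(1) by (auto intro: wf_graph_graph_Union)
  have disjoint: "fst (G i) \<inter> fst (graph_Union J G) = {}"
    using insert.prems(2) insert.hyps(3) by (auto simp: graph_Union_def disjoint_family_on_def)
  have "p (graph_Union J G) \<le> k"
    using insert.prems by (intro insert.IH) (auto simp: disjoint_family_on_def)
  moreover have "graph_Union (insert i J) G = graph_union (G i) (graph_Union J G)"
    by (simp add: graph_Union_def graph_union_def)
  ultimately show ?case
    using max_graph_union[OF wf_i wf_J disjoint] insert.prems(1) by simp
qed

end

definition objective :: "'s vstruct \<Rightarrow> 's vstruct \<Rightarrow> (nat \<Rightarrow> nat) \<Rightarrow> real" where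
  "objective A C h = (\<Sum>f\<in>syms A. \<Sum>xs\<in>tuples (sdom A) (ar A f).
      real_of_rat (sfn A f xs * sfn C f (map h xs)))"

lemma opt_eq_Max_objective: "opt A C = Max (objective A C ` (sdom A \<rightarrow>\<^sub>E sdom C))"
  by (simp add: opt_def objective_def)

lemma finite_tuples: "finite V \<Longrightarrow> finite (tuples V m)"
  unfolding tuples_def by (rule finite_lists_length_eq)

lemma map_in_tuples: "xs \<in> tuples V m \<Longrightarrow> h \<in> V \<rightarrow>\<^sub>E W \<Longrightarrow> map h xs \<in> tuples W m"
  unfolding tuples_def by auto

lemma is_struct_nonneg:
  "is_struct A \<Longrightarrow> f \<in> syms A \<Longrightarrow> xs \<in> tuples (sdom A) (ar A f) \<Longrightarrow> 0 \<le> sfn A f xs"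
  unfolding is_struct_def by blast

lemma objective_term_nonneg:
  assumes A: "is_struct A" and C: "is_struct C" and sig: "same_sig C A"
    and f: "f \<in> syms A" and xs: "xs \<in> tuples (sdom A) (ar A f)" and h: "h \<in> sdom A \<rightarrow>\<^sub>E sdom C"
  shows "0 \<le> sfn A f xs * sfn C f (map h xs)"
proof -
  have "f \<in> syms C" "ar C f = ar A f" using sig f by (auto simp: same_sig_def)
  then have "0 \<le> sfn C f (map h xs)"
    using is_struct_nonneg[OF C] map_in_tuples[OF xs h] by simp
  then show ?thesis using is_struct_nonneg[OF A f xs] by simp
qed

lemma objective_le_opt:
  "finite (sdom A) \<Longrightarrow> finite (sdom C) \<Longrightarrow> h \<in> sdom A \<rightarrow>\<^sub>E sdom C \<Longrightarrow> objective A C h \<le> opt A C"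
  unfolding opt_eq_Max_objective by (intro Max_ge) (auto intro: finite_PiE)

lemma opt_attained:
  assumes "finite (sdom A)" "finite (sdom C)" "sdom C \<noteq> {}"
  obtains h where "h \<in> sdom A \<rightarrow>\<^sub>E sdom C" "opt A C = objective A C h"
proof -
  have "opt A C \<in> objective A C ` (sdom A \<rightarrow>\<^sub>E sdom C)"
    unfolding opt_eq_Max_objective using assms
    by (intro Max_in) (auto intro: finite_PiE simp: PiE_eq_empty_iff)
  then show ?thesis using that by blast
qed

lemma opt_nonneg:
  assumes A: "is_struct A" and C: "is_struct C" and sig: "same_sig C A"
  shows "0 \<le> opt A C"
proof -
  obtain h where h: "h \<in> sdom A \<rightarrow>\<^sub>E sdom C" and "opt A C = objective A C h"
    using opt_attained A C unfolding is_struct_def by metis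
  then show ?thesis
    unfolding objective_def by (simp add: sum_nonneg objective_term_nonneg[OF A C sig _ _ h])
qed

lemma objective_term_le_opt:
  assumes A: "is_struct A" and C: "is_struct C" and sig: "same_sig C A"
    and f: "f \<in> syms A" and xs: "xs \<in> tuples (sdom A) (ar A f)" and h: "h \<in> sdom A \<rightarrow>\<^sub>E sdom C"
  shows "real_of_rat (sfn A f xs * sfn C f (map h xs)) \<le> opt A C"
proof -
  have finite: "finite (syms A)" "finite (tuples (sdom A) (ar A f))" "finite (sdom C)"
    using A C by (auto simp: is_struct_def finite_tuples)
  have "real_of_rat (sfn A f xs * sfn C f (map h xs))
      \<le> (\<Sum>ys\<in>tuples (sdom A) (ar A f). real_of_rat (sfn A f ys * sfn C f (map h ys)))"
    using xs finite objective_term_nonneg[OF A C sig f _ h] by (intro member_le_sum) auto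
  also have "\<dots> \<le> objective A C h"
    unfolding objective_def using f finite objective_term_nonneg[OF A C sig _ _ h]
    by (intro member_le_sum) (auto intro: sum_nonneg)
  also have "\<dots> \<le> opt A C"
    using A finite h by (intro objective_le_opt) (auto simp: is_struct_def)
  finally show ?thesis .
qed

lemma objective_restricted_le_opt:
  assumes A: "is_struct A" and C: "is_struct C" and sig: "same_sig C A" and h: "h \<in> sdom A \<rightarrow>\<^sub>E sdom C"
  shows "(\<Sum>f\<in>syms A. \<Sum>xs\<in>tuples (sdom A) (ar A f).
      if P f xs then real_of_rat (sfn A f xs * sfn C f (map h xs)) else 0) \<le> opt A C"
proof -
  have "(\<Sum>f\<in>syms A. \<Sum>xs\<in>tuples (sdom A) (ar A f).
      if P f xs then real_of_rat (sfn A f xs * sfn C f (map h xs)) else 0) \<le> objective A C h"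
    unfolding objective_def using objective_term_nonneg[OF A C sig _ _ h] by (intro sum_mono) auto
  also have "\<dots> \<le> opt A C"
    using A C h by (intro objective_le_opt) (auto simp: is_struct_def)
  finally show ?thesis .
qed

lemma ln_dist_le:
  fixes a b \<epsilon> :: real
  assumes a: "0 \<le> a" and \<epsilon>: "0 < \<epsilon>" and ab: "b \<le> (1 + \<epsilon>) * a" and ba: "a \<le> (1 + \<epsilon>) * b"
  shows "ln_dist a b \<le> ereal \<epsilon>"
proof (cases "a = 0")
  case True
  have "b \<le> 0" using ab True by simp
  moreover have "0 \<le> b" using ba True \<epsilon> by (simp add: zero_le_mult_iff)
  ultimately have "b = 0" by simp
  then show ?thesis using True \<epsilon> by (simp add: ln_dist_def)
next
  case False
  then have a: "0 < a" using a by simp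
  have b: "0 < b"
  proof (rule ccontr)
    assume "\<not> 0 < b"
    then have "(1 + \<epsilon>) * b \<le> 0" using \<epsilon> by (simp add: mult_nonneg_nonpos)
    then show False using ba a by simp
  qed
  have "ln b \<le> ln ((1 + \<epsilon>) * a)" "ln a \<le> ln ((1 + \<epsilon>) * b)"
    using ab ba a b \<epsilon> by simp_all
  then have "ln b \<le> ln (1 + \<epsilon>) + ln a" "ln a \<le> ln (1 + \<epsilon>) + ln b"
    using a b \<epsilon> by (simp_all add: ln_mult)
  moreover have "ln (1 + \<epsilon>) \<le> \<epsilon>" using \<epsilon> by (intro ln_add_one_self_le_self) simp
  ultimately have "\<bar>ln a - ln b\<bar> \<le> \<epsilon>" by linarith
  then show ?thesis using a b by (simp add: ln_dist_def)
qed

lemma d_opt_le: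
  assumes A: "is_struct A" and \<epsilon>: "0 < \<epsilon>"
    and bounds: "\<And>C. is_struct C \<Longrightarrow> same_sig C A \<Longrightarrow>
      opt B C \<le> (1 + \<epsilon>) * opt A C \<and> opt A C \<le> (1 + \<epsilon>) * opt B C"
  shows "d_opt A B \<le> ereal \<epsilon>"
  unfolding d_opt_def
proof (rule Sup_least)
  fix x assume "x \<in> {ln_dist (opt A C) (opt B C) |C. is_struct C \<and> same_sig C A}"
  then obtain C where x: "x = ln_dist (opt A C) (opt B C)" and C: "is_struct C" "same_sig C A"
    by blast
  then have "opt B C \<le> (1 + \<epsilon>) * opt A C" "opt A C \<le> (1 + \<epsilon>) * opt B C"
    using bounds by auto
  then show "x \<le> ereal \<epsilon>" unfolding x by (rule ln_dist_le[OF opt_nonneg[OF A C] \<epsilon>])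
qed

section \<open>Weighted disjoint unions of vertex deletions\<close>

definition tag :: "nat \<Rightarrow> nat \<Rightarrow> nat" where
  "tag i v = prod_encode (i, v)"

text \<open>A tuple meeting \<open>X\<close> without lying inside it is kept in the copy of \<open>A - X\<close>, with its
  entries in \<open>X\<close> replaced by an entry outside \<open>X\<close> and with a small weight \<open>d\<close>. This makes the
  Gaifman graph of the copy equal to \<open>G\<^sub>A - X\<close> rather than a subgraph of it (\<open>p\<close> need not be
  monotone under subgraphs), while \<open>opt\<close> grows by a factor of at most \<open>1 + d * num_tuples A\<close>.\<close>

definition collapse :: "nat set \<Rightarrow> nat list \<Rightarrow> nat list" where
  "collapse X xs = map (\<lambda>x. if x \<in> X then hd (filter (\<lambda>y. y \<notin> X) xs) else x) xs"

definition kept_tuples :: "nat set \<Rightarrow> nat set \<Rightarrow> nat \<Rightarrow> nat list set" where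
  "kept_tuples V X m = {xs \<in> tuples V m. set xs \<inter> X = {} \<or> \<not> set xs \<subseteq> X}"

definition copy_tuple :: "nat \<Rightarrow> nat set \<Rightarrow> nat list \<Rightarrow> nat list" where
  "copy_tuple i X xs = map (tag i) (collapse X xs)"

definition copy_weight :: "rat \<Rightarrow> nat set \<Rightarrow> nat list \<Rightarrow> rat" where
  "copy_weight d X xs = (if set xs \<inter> X = {} then 1 else d)"

definition deletion_mixture ::
    "'s vstruct \<Rightarrow> nat \<Rightarrow> (nat \<Rightarrow> nat set) \<Rightarrow> (nat \<Rightarrow> rat) \<Rightarrow> rat \<Rightarrow> 's vstruct" where
  "deletion_mixture A n X c d =
     \<lparr>syms = syms A, ar = ar A, sdom = (\<Union>i<n. tag i ` (sdom A - X i)),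
      sfn = (\<lambda>f ys. \<Sum>i<n. \<Sum>xs \<in> {xs \<in> kept_tuples (sdom A) (X i) (ar A f). copy_tuple i (X i) xs = ys}.
               c i * copy_weight d (X i) xs * sfn A f xs)\<rparr>"

definition num_tuples :: "'s vstruct \<Rightarrow> nat" where
  "num_tuples A = (\<Sum>f\<in>syms A. card (tuples (sdom A) (ar A f)))"

definition collapsed_objective :: "'s vstruct \<Rightarrow> 's vstruct \<Rightarrow> rat \<Rightarrow> nat set \<Rightarrow> (nat \<Rightarrow> nat) \<Rightarrow> real" where
  "collapsed_objective A C d X g = (\<Sum>f\<in>syms A. \<Sum>xs\<in>kept_tuples (sdom A) X (ar A f).
      real_of_rat (copy_weight d X xs * sfn A f xs * sfn C f (map g (collapse X xs))))"

lemma tag_eq_iff [simp]: "tag i u = tag j v \<longleftrightarrow> i = j \<and> u = v"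
  by (simp add: tag_def)

lemma kept_tuples_subset: "kept_tuples V X m \<subseteq> tuples V m"
  unfolding kept_tuples_def by blast

lemma finite_kept_tuples: "finite V \<Longrightarrow> finite (kept_tuples V X m)"
  using finite_subset[OF kept_tuples_subset finite_tuples] .

lemma collapse_disjoint: "set xs \<inter> X = {} \<Longrightarrow> collapse X xs = xs"
  unfolding collapse_def by (rule map_idI) auto

lemma collapse_eq_map:
  assumes "\<not> set xs \<subseteq> X"
  obtains u where "u \<in> set xs" "u \<notin> X" "collapse X xs = map (\<lambda>x. if x \<in> X then u else x) xs"
proof -
  define u where "u = hd (filter (\<lambda>y. y \<notin> X) xs)"
  have "filter (\<lambda>y. y \<notin> X) xs \<noteq> []" using assms by (auto simp: filter_empty_conv)
  then have "u \<in> set (filter (\<lambda>y. y \<notin> X) xs)" unfolding u_def by (rule hd_in_set)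
  then show ?thesis by (intro that[of u]) (auto simp: collapse_def u_def)
qed

lemma set_collapse:
  assumes "xs \<in> kept_tuples V X m"
  shows "set (collapse X xs) = set xs - X"
proof (cases "set xs \<inter> X = {}")
  case True
  then show ?thesis by (auto simp: collapse_disjoint)
next
  case False
  then have "\<not> set xs \<subseteq> X" using assms by (auto simp: kept_tuples_def)
  then obtain u where "u \<in> set xs" "u \<notin> X" "collapse X xs = map (\<lambda>x. if x \<in> X then u else x) xs"
    by (rule collapse_eq_map)
  then show ?thesis using False by (auto simp: image_iff)
qed

lemma set_copy_tuple: "xs \<in> kept_tuples V X m \<Longrightarrow> set (copy_tuple i X xs) = tag i ` (set xs - X)"
  by (simp add: copy_tuple_def set_collapse)

lemma collapse_as_assignment:
  assumes xs: "xs \<in> kept_tuples V X m" and g: "g \<in> V - X \<rightarrow> W" and W: "W \<noteq> {}"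
  obtains h where "h \<in> V \<rightarrow>\<^sub>E W" "map g (collapse X xs) = map h xs"
proof (cases "set xs \<inter> X = {}")
  case True
  obtain w where "w \<in> W" using W by blast
  then show ?thesis
    using xs g True by (intro that[of "restrict (\<lambda>x. if x \<in> X then w else g x) V"])
      (auto simp: collapse_disjoint kept_tuples_def tuples_def Pi_iff)
next
  case False
  then have "\<not> set xs \<subseteq> X" using xs by (auto simp: kept_tuples_def)
  then obtain u where "u \<in> set xs" "u \<notin> X" "collapse X xs = map (\<lambda>x. if x \<in> X then u else x) xs"
    by (rule collapse_eq_map)
  then show ?thesis
    using xs g by (intro that[of "restrict (\<lambda>x. if x \<in> X then g u else g x) V"])
      (auto simp: kept_tuples_def tuples_def Pi_iff)
qed

lemma copy_tuple_in_tuples: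
  assumes "xs \<in> kept_tuples V (X i) m" "i < n"
  shows "copy_tuple i (X i) xs \<in> tuples (\<Union>i<n. tag i ` (V - X i)) m"
proof -
  have "set xs \<subseteq> V" "length xs = m" using assms(1) by (auto simp: kept_tuples_def tuples_def)
  then show ?thesis
    using set_copy_tuple[OF assms(1)] assms(2) by (auto simp: tuples_def copy_tuple_def collapse_def)
qed

lemma deletion_mixture_simps [simp]:
  "syms (deletion_mixture A n X c d) = syms A"
  "ar (deletion_mixture A n X c d) = ar A"
  "sdom (deletion_mixture A n X c d) = (\<Union>i<n. tag i ` (sdom A - X i))"
  by (simp_all add: deletion_mixture_def)

lemma sfn_deletion_mixture:
  "sfn (deletion_mixture A n X c d) f ys =
     (\<Sum>i<n. \<Sum>xs \<in> {xs \<in> kept_tuples (sdom A) (X i) (ar A f). copy_tuple i (X i) xs = ys}.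
        c i * copy_weight d (X i) xs * sfn A f xs)"
  by (simp add: deletion_mixture_def)

lemma objective_deletion_mixture:
  assumes fin: "finite (sdom A)"
  shows "objective (deletion_mixture A n X c d) C H =
    (\<Sum>i<n. real_of_rat (c i) * collapsed_objective A C d (X i) (H \<circ> tag i))"
proof -
  let ?D = "\<Union>i<n. tag i ` (sdom A - X i)"
  let ?K = "\<lambda>i f. kept_tuples (sdom A) (X i) (ar A f)"
  let ?w = "\<lambda>i f xs. real_of_rat (c i * copy_weight d (X i) xs * sfn A f xs)"
  let ?F = "\<lambda>f ys. real_of_rat (sfn C f (map H ys))"
  have fibres: "(\<Sum>ys\<in>tuples ?D (ar A f). \<Sum>xs\<in>{xs \<in> ?K i f. copy_tuple i (X i) xs = ys}.
        ?w i f xs * ?F f ys) = (\<Sum>xs\<in>?K i f. ?w i f xs * ?F f (copy_tuple i (X i) xs))"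
    if "i < n" for i f
  proof -
    have "(\<Sum>ys\<in>tuples ?D (ar A f). \<Sum>xs\<in>{xs \<in> ?K i f. copy_tuple i (X i) xs = ys}. ?w i f xs * ?F f ys)
        = (\<Sum>ys\<in>tuples ?D (ar A f). \<Sum>xs\<in>{xs \<in> ?K i f. copy_tuple i (X i) xs = ys}.
            ?w i f xs * ?F f (copy_tuple i (X i) xs))"
      by (intro sum.cong refl) auto
    also have "\<dots> = (\<Sum>xs\<in>?K i f. ?w i f xs * ?F f (copy_tuple i (X i) xs))"
      using that fin by (intro sum.group) (auto simp: finite_kept_tuples finite_tuples copy_tuple_in_tuples)
    finally show ?thesis .
  qed
  have "objective (deletion_mixture A n X c d) C H
      = (\<Sum>f\<in>syms A. \<Sum>i<n. \<Sum>ys\<in>tuples ?D (ar A f).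
          \<Sum>xs\<in>{xs \<in> ?K i f. copy_tuple i (X i) xs = ys}. ?w i f xs * ?F f ys)"
    unfolding objective_def
    by (simp add: sfn_deletion_mixture of_rat_mult of_rat_sum sum_distrib_right sum.swap[of _ "{..<n}"])
  also have "\<dots> = (\<Sum>f\<in>syms A. \<Sum>i<n. \<Sum>xs\<in>?K i f. ?w i f xs * ?F f (copy_tuple i (X i) xs))"
    by (simp add: fibres)
  also have "\<dots> = (\<Sum>i<n. real_of_rat (c i) * collapsed_objective A C d (X i) (H \<circ> tag i))"
    unfolding collapsed_objective_def
    by (simp add: sum.swap[of _ "syms A"] sum_distrib_left of_rat_mult copy_tuple_def mult.assoc)
  finally show ?thesis .
qed

lemma collapsed_term_le_opt:
  assumes A: "is_struct A" and C: "is_struct C" and sig: "same_sig C A"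
    and d: "0 \<le> d" and g: "g \<in> sdom A - X \<rightarrow> sdom C"
    and f: "f \<in> syms A" and xs: "xs \<in> kept_tuples (sdom A) X (ar A f)" and meets: "set xs \<inter> X \<noteq> {}"
  shows "real_of_rat (copy_weight d X xs * sfn A f xs * sfn C f (map g (collapse X xs)))
    \<le> real_of_rat d * opt A C"
proof -
  have "sdom C \<noteq> {}" using C by (simp add: is_struct_def)
  then obtain h where h: "h \<in> sdom A \<rightarrow>\<^sub>E sdom C" and "map g (collapse X xs) = map h xs"
    using collapse_as_assignment[OF xs g] by blast
  then have "real_of_rat (copy_weight d X xs * sfn A f xs * sfn C f (map g (collapse X xs)))
      = real_of_rat d * real_of_rat (sfn A f xs * sfn C f (map h xs))"
    using meets by (simp add: copy_weight_def of_rat_mult)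
  also have "\<dots> \<le> real_of_rat d * opt A C"
    using xs kept_tuples_subset d
    by (intro mult_left_mono objective_term_le_opt[OF A C sig f _ h]) auto
  finally show ?thesis .
qed

lemma sum_kept_tuples_const_le:
  fixes a :: real
  assumes "finite (sdom A)" "0 \<le> a"
  shows "(\<Sum>f\<in>syms A. \<Sum>xs\<in>kept_tuples (sdom A) X (ar A f). a) \<le> real (num_tuples A) * a"
proof -
  have "(\<Sum>f\<in>syms A. \<Sum>xs\<in>kept_tuples (sdom A) X (ar A f). a)
      \<le> (\<Sum>f\<in>syms A. real (card (tuples (sdom A) (ar A f))) * a)"
    using assms by (intro sum_mono) (simp add: mult_right_mono card_mono finite_tuples kept_tuples_subset)
  then show ?thesis by (simp add: num_tuples_def sum_distrib_right)
qed

lemma collapsed_objective_le: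
  assumes A: "is_struct A" and C: "is_struct C" and sig: "same_sig C A"
    and d: "0 \<le> d" and g: "g \<in> sdom A - X \<rightarrow> sdom C"
  shows "collapsed_objective A C d X g \<le> (1 + real_of_rat d * real (num_tuples A)) * opt A C"
proof -
  let ?K = "\<lambda>f. kept_tuples (sdom A) X (ar A f)"
  let ?o = "opt A C"
  have fin: "finite (sdom A)" and "sdom C \<noteq> {}" using A C by (auto simp: is_struct_def)
  have o: "0 \<le> ?o" by (rule opt_nonneg[OF A C sig])
  obtain c0 where c0: "c0 \<in> sdom C" using \<open>sdom C \<noteq> {}\<close> by blast
  define h0 where "h0 = restrict (\<lambda>x. if x \<in> X then c0 else g x) (sdom A)"
  have h0: "h0 \<in> sdom A \<rightarrow>\<^sub>E sdom C" using c0 g by (auto simp: h0_def Pi_iff)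
  let ?disj = "\<lambda>f xs. if set xs \<inter> X = {} then real_of_rat (sfn A f xs * sfn C f (map h0 xs)) else 0"
  have "real_of_rat (copy_weight d X xs * sfn A f xs * sfn C f (map g (collapse X xs)))
      \<le> ?disj f xs + real_of_rat d * ?o"
    if f: "f \<in> syms A" and xs: "xs \<in> ?K f" for f xs
  proof (cases "set xs \<inter> X = {}")
    case True
    then have "map g (collapse X xs) = map h0 xs"
      using xs by (auto simp: collapse_disjoint h0_def kept_tuples_def tuples_def)
    then show ?thesis using True d o by (simp add: copy_weight_def)
  next
    case False
    then show ?thesis using collapsed_term_le_opt[OF A C sig d g f xs] by simp
  qed
  then have "collapsed_objective A C d X g
      \<le> (\<Sum>f\<in>syms A. \<Sum>xs\<in>?K f. ?disj f xs) + (\<Sum>f\<in>syms A. \<Sum>xs\<in>?K f. real_of_rat d * ?o)"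
    unfolding collapsed_objective_def sum.distrib[symmetric] by (intro sum_mono)
  moreover have "(\<Sum>f\<in>syms A. \<Sum>xs\<in>?K f. ?disj f xs) = (\<Sum>f\<in>syms A. \<Sum>xs\<in>tuples (sdom A) (ar A f). ?disj f xs)"
    using fin by (intro sum.cong refl sum.mono_neutral_left) (auto simp: finite_tuples kept_tuples_def)
  moreover have "\<dots> \<le> ?o"
    by (rule objective_restricted_le_opt[OF A C sig h0])
  moreover have "(\<Sum>f\<in>syms A. \<Sum>xs\<in>?K f. real_of_rat d * ?o) \<le> real (num_tuples A) * (real_of_rat d * ?o)"
    using d o by (intro sum_kept_tuples_const_le[OF fin]) simp
  ultimately show ?thesis by (simp add: algebra_simps)
qed

lemma opt_deletion_mixture_le:
  assumes A: "is_struct A" and C: "is_struct C" and sig: "same_sig C A"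
    and d: "0 \<le> d" and c: "\<forall>i<n. 0 \<le> c i"
  shows "opt (deletion_mixture A n X c d) C
    \<le> (\<Sum>i<n. real_of_rat (c i)) * ((1 + real_of_rat d * real (num_tuples A)) * opt A C)"
proof -
  let ?B = "deletion_mixture A n X c d"
  let ?b = "(1 + real_of_rat d * real (num_tuples A)) * opt A C"
  have fin: "finite (sdom A)" "finite (sdom C)" and C_ne: "sdom C \<noteq> {}"
    using A C by (auto simp: is_struct_def)
  have "objective ?B C H \<le> (\<Sum>i<n. real_of_rat (c i)) * ?b" if H: "H \<in> sdom ?B \<rightarrow>\<^sub>E sdom C" for H
  proof -
    have "H \<circ> tag i \<in> sdom A - X i \<rightarrow> sdom C" if "i < n" for i
      using H that by (auto simp: Pi_iff)
    then have "objective ?B C H \<le> (\<Sum>i<n. real_of_rat (c i) * ?b)"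
      unfolding objective_deletion_mixture[OF fin(1)] using c
      by (intro sum_mono mult_left_mono collapsed_objective_le[OF A C sig d]) auto
    then show ?thesis by (simp add: sum_distrib_right)
  qed
  moreover have "finite (sdom ?B)" using fin by simp
  ultimately show ?thesis
    unfolding opt_eq_Max_objective[of ?B] using fin C_ne
    by (intro Max.boundedI) (auto intro!: finite_imageI finite_PiE simp: PiE_eq_empty_iff)
qed

lemma collapsed_objective_ge:
  assumes A: "is_struct A" and C: "is_struct C" and sig: "same_sig C A" and d: "0 \<le> d"
    and h: "h \<in> sdom A \<rightarrow>\<^sub>E sdom C" and g: "\<forall>x\<in>sdom A - X. g x = h x"
  shows "(\<Sum>f\<in>syms A. \<Sum>xs\<in>tuples (sdom A) (ar A f).
      if set xs \<inter> X = {} then real_of_rat (sfn A f xs * sfn C f (map h xs)) else 0)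
    \<le> collapsed_objective A C d X g"
proof -
  let ?K = "\<lambda>f. kept_tuples (sdom A) X (ar A f)"
  let ?disj = "\<lambda>f xs. if set xs \<inter> X = {} then real_of_rat (sfn A f xs * sfn C f (map h xs)) else 0"
  have fin: "finite (sdom A)" and C_ne: "sdom C \<noteq> {}" using A C by (auto simp: is_struct_def)
  have g': "g \<in> sdom A - X \<rightarrow> sdom C" using g h by auto
  have term_ge: "?disj f xs \<le> real_of_rat (copy_weight d X xs * sfn A f xs * sfn C f (map g (collapse X xs)))"
    if f: "f \<in> syms A" and xs: "xs \<in> ?K f" for f xs
  proof -
    obtain h' where h': "h' \<in> sdom A \<rightarrow>\<^sub>E sdom C" and "map g (collapse X xs) = map h' xs"
      using collapse_as_assignment[OF xs g' C_ne] .
    moreover have "xs \<in> tuples (sdom A) (ar A f)" using xs kept_tuples_subset by blast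
    ultimately have "0 \<le> copy_weight d X xs * (sfn A f xs * sfn C f (map g (collapse X xs)))"
      using objective_term_nonneg[OF A C sig f _ h'] d by (simp add: copy_weight_def)
    then have nonneg: "0 \<le> real_of_rat (copy_weight d X xs * sfn A f xs * sfn C f (map g (collapse X xs)))"
      by (simp add: mult.assoc)
    show ?thesis
    proof (cases "set xs \<inter> X = {}")
      case True
      then have "map g (collapse X xs) = map h xs"
        using xs g by (auto simp: collapse_disjoint kept_tuples_def tuples_def)
      then show ?thesis using True by (simp add: copy_weight_def)
    next
      case False
      then show ?thesis using nonneg by simp
    qed
  qed
  have "(\<Sum>f\<in>syms A. \<Sum>xs\<in>tuples (sdom A) (ar A f). ?disj f xs) = (\<Sum>f\<in>syms A. \<Sum>xs\<in>?K f. ?disj f xs)"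
    using fin by (intro sum.cong refl sum.mono_neutral_right)
      (auto simp: finite_tuples kept_tuples_def)
  also have "\<dots> \<le> collapsed_objective A C d X g"
    unfolding collapsed_objective_def by (intro sum_mono term_ge)
  finally show ?thesis .
qed

lemma sum_filter_mult:
  fixes a :: "'a \<Rightarrow> 'b::semiring_0"
  assumes "finite I"
  shows "(\<Sum>i\<in>{i\<in>I. P i}. a i) * t = (\<Sum>i\<in>I. a i * (if P i then t else 0))"
proof -
  have "(\<Sum>i\<in>{i\<in>I. P i}. a i) = (\<Sum>i\<in>I. if P i then a i else 0)"
    using assms by (rule sum.inter_filter)
  then show ?thesis by (auto simp: sum_distrib_right intro!: sum.cong)
qed

lemma opt_deletion_mixture_ge:
  assumes A: "is_struct A" and C: "is_struct C" and sig: "same_sig C A"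
    and d: "0 \<le> d" and c: "\<forall>i<n. 0 \<le> c i"
    and avoid: "\<forall>f\<in>syms A. \<forall>xs\<in>tuples (sdom A) (ar A f).
      L \<le> (\<Sum>i\<in>{i\<in>{..<n}. set xs \<inter> X i = {}}. real_of_rat (c i))"
  shows "L * opt A C \<le> opt (deletion_mixture A n X c d) C"
proof -
  let ?V = "sdom A"
  let ?B = "deletion_mixture A n X c d"
  have fin: "finite ?V" "finite (sdom C)" and C_ne: "sdom C \<noteq> {}"
    using A C by (auto simp: is_struct_def)
  obtain h where h: "h \<in> ?V \<rightarrow>\<^sub>E sdom C" and opt_h: "opt A C = objective A C h"
    using opt_attained[OF fin C_ne] .
  define H where "H = restrict (\<lambda>z. h (snd (prod_decode z))) (sdom ?B)"
  have H: "H \<in> sdom ?B \<rightarrow>\<^sub>E sdom C" using h by (auto simp: H_def tag_def)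
  have H_tag: "\<forall>x\<in>?V - X i. (H \<circ> tag i) x = h x" if "i < n" for i
    using that by (auto simp: H_def tag_def)
  let ?disj = "\<lambda>i f xs. if set xs \<inter> X i = {} then real_of_rat (sfn A f xs * sfn C f (map h xs)) else 0"
  have "L * opt A C \<le> (\<Sum>f\<in>syms A. \<Sum>xs\<in>tuples ?V (ar A f).
      (\<Sum>i\<in>{i\<in>{..<n}. set xs \<inter> X i = {}}. real_of_rat (c i)) * real_of_rat (sfn A f xs * sfn C f (map h xs)))"
    unfolding opt_h objective_def sum_distrib_left
    using avoid objective_term_nonneg[OF A C sig _ _ h] by (intro sum_mono mult_right_mono) auto
  also have "\<dots> = (\<Sum>f\<in>syms A. \<Sum>xs\<in>tuples ?V (ar A f). \<Sum>i<n. real_of_rat (c i) * ?disj i f xs)"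
    by (simp only: sum_filter_mult[OF finite_lessThan])
  also have "\<dots> = (\<Sum>i<n. real_of_rat (c i) * (\<Sum>f\<in>syms A. \<Sum>xs\<in>tuples ?V (ar A f). ?disj i f xs))"
    by (simp add: sum_distrib_left sum.swap[of _ "{..<n}"])
  also have "\<dots> \<le> (\<Sum>i<n. real_of_rat (c i) * collapsed_objective A C d (X i) (H \<circ> tag i))"
    using c H_tag by (intro sum_mono mult_left_mono collapsed_objective_ge[OF A C sig d h]) auto
  also have "\<dots> = objective ?B C H"
    by (rule objective_deletion_mixture[OF fin(1), symmetric])
  also have "\<dots> \<le> opt ?B C"
    using fin H by (intro objective_le_opt) auto
  finally show ?thesis .
qed

lemma d_opt_deletion_mixture_le:
  assumes A: "is_struct A" and \<epsilon>: "0 < \<epsilon>"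
    and t: "0 \<le> t" "(1 + t) * (1 + t) \<le> 1 + \<epsilon>"
    and c: "\<forall>i<n. 0 \<le> c i" "(\<Sum>i<n. real_of_rat (c i)) \<le> 1 + t"
    and d: "0 \<le> d" "real_of_rat d * real (num_tuples A) \<le> t"
    and avoid: "\<forall>f\<in>syms A. \<forall>xs\<in>tuples (sdom A) (ar A f).
      L \<le> (\<Sum>i\<in>{i\<in>{..<n}. set xs \<inter> X i = {}}. real_of_rat (c i))"
    and L: "1 \<le> (1 + \<epsilon>) * L"
  shows "d_opt A (deletion_mixture A n X c d) \<le> ereal \<epsilon>"
proof (rule d_opt_le[OF A \<epsilon>])
  fix C assume C: "is_struct C" "same_sig C A"
  let ?B = "deletion_mixture A n X c d"
  have o: "0 \<le> opt A C" using opt_nonneg[OF A C] .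
  have "opt ?B C \<le> (\<Sum>i<n. real_of_rat (c i)) * ((1 + real_of_rat d * real (num_tuples A)) * opt A C)"
    by (rule opt_deletion_mixture_le[OF A C d(1) c(1)])
  also have "\<dots> \<le> (1 + t) * ((1 + t) * opt A C)"
    using c d t o by (intro mult_mono mult_right_mono) (auto intro: sum_nonneg)
  also have "\<dots> \<le> (1 + \<epsilon>) * opt A C"
    using t o by (simp add: mult.assoc[symmetric] mult_right_mono)
  finally have upper: "opt ?B C \<le> (1 + \<epsilon>) * opt A C" .
  have "opt A C \<le> (1 + \<epsilon>) * (L * opt A C)"
    using mult_right_mono[OF L o] by (simp add: mult.assoc)
  also have "\<dots> \<le> (1 + \<epsilon>) * opt ?B C"
    using opt_deletion_mixture_ge[OF A C d(1) c(1) avoid] \<epsilon> by simp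
  finally show "opt ?B C \<le> (1 + \<epsilon>) * opt A C \<and> opt A C \<le> (1 + \<epsilon>) * opt ?B C"
    using upper by simp
qed

section \<open>The Gaifman graph of the weighted union\<close>

lemma sum_pos_iff_ex_pos:
  fixes a :: "'a \<Rightarrow> 'b::linordered_ab_group_add"
  assumes "finite S" "\<And>x. x \<in> S \<Longrightarrow> 0 \<le> a x"
  shows "0 < sum a S \<longleftrightarrow> (\<exists>x\<in>S. 0 < a x)"
  using sum_nonneg_eq_0_iff[OF assms] sum_nonneg[of S a] assms(2) by (auto simp: order_less_le)

lemma deletion_mixture_term_nonneg:
  assumes A: "is_struct A" and f: "f \<in> syms A" and c: "0 \<le> c" and d: "0 \<le> d"
    and xs: "xs \<in> kept_tuples (sdom A) X (ar A f)"
  shows "0 \<le> c * copy_weight d X xs * sfn A f xs"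
proof -
  have "0 \<le> sfn A f xs" using is_struct_nonneg[OF A f] kept_tuples_subset xs by blast
  then show ?thesis using c d by (simp add: copy_weight_def)
qed

lemma is_struct_deletion_mixture:
  assumes A: "is_struct A" and c: "\<forall>i<n. 0 \<le> c i" and d: "0 \<le> d"
    and ne: "\<exists>i<n. \<not> sdom A \<subseteq> X i"
  shows "is_struct (deletion_mixture A n X c d)"
  unfolding is_struct_def
proof (intro conjI ballI)
  show "finite (syms (deletion_mixture A n X c d))" "finite (sdom (deletion_mixture A n X c d))"
    using A by (simp_all add: is_struct_def)
  show "sdom (deletion_mixture A n X c d) \<noteq> {}" using ne by auto
  fix f ys assume "f \<in> syms (deletion_mixture A n X c d)"
  then show "0 \<le> sfn (deletion_mixture A n X c d) f ys"
    unfolding sfn_deletion_mixture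
    using deletion_mixture_term_nonneg[OF A] c d by (auto intro!: sum_nonneg)
qed

lemma sfn_deletion_mixture_pos_iff:
  assumes A: "is_struct A" and f: "f \<in> syms A" and c: "\<forall>i<n. 0 < c i" and d: "0 < d"
  shows "0 < sfn (deletion_mixture A n X c d) f ys \<longleftrightarrow>
    (\<exists>i<n. \<exists>xs\<in>kept_tuples (sdom A) (X i) (ar A f). 0 < sfn A f xs \<and> copy_tuple i (X i) xs = ys)"
proof -
  let ?S = "\<lambda>i. {xs \<in> kept_tuples (sdom A) (X i) (ar A f). copy_tuple i (X i) xs = ys}"
  let ?t = "\<lambda>i xs. c i * copy_weight d (X i) xs * sfn A f xs"
  have fin: "finite (?S i)" for i using A by (simp add: is_struct_def finite_kept_tuples)
  have nonneg: "0 \<le> ?t i xs" if "i < n" "xs \<in> ?S i" for i xs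
    using deletion_mixture_term_nonneg[OF A f] that c d by (simp add: less_imp_le)
  have pos_term: "0 < ?t i xs \<longleftrightarrow> 0 < sfn A f xs" if "i < n" for i xs
  proof -
    have "0 < c i * copy_weight d (X i) xs" using that c d by (simp add: copy_weight_def)
    then show ?thesis by (metis mult_pos_pos zero_less_mult_pos)
  qed
  have pos_copy: "0 < (\<Sum>xs\<in>?S i. ?t i xs) \<longleftrightarrow> (\<exists>xs\<in>?S i. 0 < sfn A f xs)" if "i < n" for i
  proof -
    have "0 < (\<Sum>xs\<in>?S i. ?t i xs) \<longleftrightarrow> (\<exists>xs\<in>?S i. 0 < ?t i xs)"
      using that fin nonneg by (intro sum_pos_iff_ex_pos) auto
    also have "\<dots> \<longleftrightarrow> (\<exists>xs\<in>?S i. 0 < sfn A f xs)" using pos_term[OF that] by simp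
    finally show ?thesis .
  qed
  have "0 < sfn (deletion_mixture A n X c d) f ys \<longleftrightarrow> (\<exists>i<n. 0 < (\<Sum>xs\<in>?S i. ?t i xs))"
    unfolding sfn_deletion_mixture using nonneg
    by (subst sum_pos_iff_ex_pos) (auto intro: sum_nonneg)
  also have "\<dots> \<longleftrightarrow> (\<exists>i<n. \<exists>xs\<in>?S i. 0 < sfn A f xs)" using pos_copy by blast
  finally show ?thesis by blast
qed

lemma snd_gaifman_iff:
  "e \<in> snd (gaifman A) \<longleftrightarrow> (\<exists>u v f xs. e = {u, v} \<and> u \<noteq> v \<and> f \<in> syms A \<and>
     xs \<in> tuples (sdom A) (ar A f) \<and> 0 < sfn A f xs \<and> u \<in> set xs \<and> v \<in> set xs)"
  by (auto simp: gaifman_def)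

lemma edge_deletion_mixtureD:
  assumes A: "is_struct A" and c: "\<forall>i<n. 0 < c i" and d: "0 < d"
    and e: "e \<in> snd (gaifman (deletion_mixture A n X c d))"
  shows "\<exists>i<n. \<exists>e0\<in>snd (del_vertices (gaifman A) (X i)). e = tag i ` e0"
proof -
  obtain u v f ys where uv: "e = {u, v}" "u \<noteq> v" "u \<in> set ys" "v \<in> set ys" and f: "f \<in> syms A"
    and pos: "0 < sfn (deletion_mixture A n X c d) f ys"
    using e unfolding snd_gaifman_iff by auto
  obtain i xs where i: "i < n" and xs: "xs \<in> kept_tuples (sdom A) (X i) (ar A f)"
    and pos_xs: "0 < sfn A f xs" and ys: "copy_tuple i (X i) xs = ys"
    using pos unfolding sfn_deletion_mixture_pos_iff[OF A f c d] by blast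
  obtain u' v' where u': "u = tag i u'" "u' \<in> set xs - X i" and v': "v = tag i v'" "v' \<in> set xs - X i"
    using uv(3,4) set_copy_tuple[OF xs] unfolding ys[symmetric] by blast
  have "{u', v'} \<in> snd (gaifman A)"
    unfolding snd_gaifman_iff using uv(2) u' v' f xs pos_xs kept_tuples_subset by blast
  then have "{u', v'} \<in> snd (del_vertices (gaifman A) (X i))"
    using u' v' by (simp add: del_vertices_def)
  moreover have "e = tag i ` {u', v'}" using uv(1) u' v' by simp
  ultimately show ?thesis using i by blast
qed

lemma edge_deletion_mixtureI:
  assumes A: "is_struct A" and c: "\<forall>i<n. 0 < c i" and d: "0 < d"
    and i: "i < n" and e0: "e0 \<in> snd (del_vertices (gaifman A) (X i))"
  shows "tag i ` e0 \<in> snd (gaifman (deletion_mixture A n X c d))"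
proof -
  let ?B = "deletion_mixture A n X c d"
  obtain u v f xs where uv: "e0 = {u, v}" "u \<noteq> v" and f: "f \<in> syms A"
    and xs: "xs \<in> tuples (sdom A) (ar A f)" "0 < sfn A f xs" "u \<in> set xs" "v \<in> set xs"
    and disjoint: "e0 \<inter> X i = {}"
    using e0 unfolding del_vertices_def snd_conv mem_Collect_eq snd_gaifman_iff by blast
  have kept: "xs \<in> kept_tuples (sdom A) (X i) (ar A f)"
    using xs disjoint uv by (auto simp: kept_tuples_def)
  let ?ys = "copy_tuple i (X i) xs"
  have "?ys \<in> tuples (sdom ?B) (ar ?B f)"
    using copy_tuple_in_tuples[where X = X, OF kept i] by simp
  moreover have "0 < sfn ?B f ?ys"
    using sfn_deletion_mixture_pos_iff[OF A f c d] i kept xs(2) by blast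
  moreover have "tag i u \<in> set ?ys" "tag i v \<in> set ?ys"
    using set_copy_tuple[OF kept] xs(3,4) disjoint uv by auto
  ultimately show ?thesis
    unfolding snd_gaifman_iff uv using uv(2) f by fastforce
qed

lemma gaifman_deletion_mixture:
  assumes A: "is_struct A" and c: "\<forall>i<n. 0 < c i" and d: "0 < d"
  shows "gaifman (deletion_mixture A n X c d)
    = graph_Union {..<n} (\<lambda>i. graph_image (tag i) (del_vertices (gaifman A) (X i)))"
proof -
  have "snd (gaifman (deletion_mixture A n X c d))
      = (\<Union>i<n. (\<lambda>e. tag i ` e) ` snd (del_vertices (gaifman A) (X i)))"
    using edge_deletion_mixtureD[OF A c d] edge_deletion_mixtureI[OF A c d] by blast
  moreover have "fst (gaifman (deletion_mixture A n X c d)) = (\<Union>i<n. tag i ` (sdom A - X i))"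
    by (simp add: gaifman_def)
  ultimately show ?thesis
    by (simp add: prod_eq_iff graph_Union_def graph_image_def del_vertices_def gaifman_def)
qed

context max_on_disj_union
begin

lemma gaifman_deletion_mixture_le:
  assumes A: "is_struct A" and c: "\<forall>i<n. 0 < c i" and d: "0 < d" and n: "0 < n"
    and k: "\<forall>i<n. p (del_vertices (gaifman A) (X i)) \<le> k"
  shows "p (gaifman (deletion_mixture A n X c d)) \<le> k"
  unfolding gaifman_deletion_mixture[OF A c d]
proof (rule graph_Union_le)
  fix i assume i: "i \<in> {..<n}"
  have wf: "wf_graph (del_vertices (gaifman A) (X i))"
    using A by (simp add: wf_graph_del_vertices wf_graph_gaifman is_struct_def)
  have inj: "inj_on (tag i) (fst (del_vertices (gaifman A) (X i)))"
    by (simp add: inj_on_def)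
  show "wf_graph (graph_image (tag i) (del_vertices (gaifman A) (X i)))
      \<and> p (graph_image (tag i) (del_vertices (gaifman A) (X i))) \<le> k"
    using wf_graph_graph_image[OF wf inj] graph_image_invariant[OF wf inj] k i by simp
next
  show "disjoint_family_on (\<lambda>i. fst (graph_image (tag i) (del_vertices (gaifman A) (X i)))) {..<n}"
    by (auto simp: disjoint_family_on_def graph_image_def)
qed (use n in auto)

end

section \<open>Discretising the deletion distribution\<close>

lemma sum_pmf_enumeration:
  fixes n :: nat
  assumes bij: "bij_betw X {..<n} (set_pmf \<pi>)"
  shows "(\<Sum>i\<in>{i\<in>{..<n}. P (X i)}. pmf \<pi> (X i)) = measure_pmf.prob \<pi> {Y. P Y}"
proof -
  let ?S = "{i\<in>{..<n}. P (X i)}"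
  have fin: "finite (set_pmf \<pi>)" using bij_betw_finite[OF bij] finite_lessThan by blast
  have inj: "inj_on X ?S" using bij_betw_imp_inj_on[OF bij] by (rule inj_on_subset) auto
  have "X ` ?S = {Y \<in> X ` {..<n}. P Y}" by auto
  also have "X ` {..<n} = set_pmf \<pi>" using bij by (rule bij_betw_imp_surj_on)
  finally have img: "X ` ?S = {Y \<in> set_pmf \<pi>. P Y}" .
  have "(\<Sum>i\<in>?S. pmf \<pi> (X i)) = (\<Sum>Y\<in>X ` ?S. pmf \<pi> Y)"
    using sum.reindex[OF inj, of "pmf \<pi>"] by (simp only: comp_def)
  also have "\<dots> = measure_pmf.prob \<pi> {Y \<in> set_pmf \<pi>. P Y}"
    unfolding img using fin by (intro measure_measure_pmf_finite[symmetric]) simp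
  also have "{Y \<in> set_pmf \<pi>. P Y} = {Y. P Y} \<inter> set_pmf \<pi>" by auto
  also have "measure_pmf.prob \<pi> \<dots> = measure_pmf.prob \<pi> {Y. P Y}" by (rule measure_Int_set_pmf)
  finally show ?thesis .
qed

lemma rational_weights_above_pmf:
  fixes n :: nat
  assumes bij: "bij_betw X {..<n} (set_pmf \<pi>)" and t: "0 < t"
  obtains c :: "nat \<Rightarrow> rat"
  where "\<forall>i. pmf \<pi> (X i) < real_of_rat (c i)" "(\<Sum>i<n. real_of_rat (c i)) \<le> 1 + t"
proof -
  have "{..<n} \<noteq> {}"
    using bij set_pmf_not_empty[of \<pi>] by (auto simp: bij_betw_def)
  then have n: "0 < n" by (cases n) auto
  then have "\<forall>i. \<exists>q. pmf \<pi> (X i) < real_of_rat q \<and> real_of_rat q < pmf \<pi> (X i) + t / n"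
    using t by (intro allI of_rat_dense) simp
  from choice[OF this] obtain c
    where c: "\<forall>i. pmf \<pi> (X i) < real_of_rat (c i) \<and> real_of_rat (c i) < pmf \<pi> (X i) + t / n"
    by blast
  have "(\<Sum>i<n. real_of_rat (c i)) \<le> (\<Sum>i<n. pmf \<pi> (X i) + t / n)"
    using c by (intro sum_mono) (simp add: less_imp_le)
  also have "\<dots> = (\<Sum>i<n. pmf \<pi> (X i)) + t" using n by (simp add: sum.distrib)
  also have "(\<Sum>i<n. pmf \<pi> (X i)) = 1"
    using sum_pmf_enumeration[OF bij, of "\<lambda>_. True"] by (simp add: lessThan_def)
  finally show ?thesis using that c by blast
qed

lemma weight_avoiding_tuple:
  fixes n :: nat and c :: "nat \<Rightarrow> real"
  assumes bij: "bij_betw X {..<n} (set_pmf \<pi>)" and c: "\<forall>i<n. pmf \<pi> (X i) \<le> c i"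
    and hit: "\<forall>v\<in>V. measure_pmf.prob \<pi> {Y. v \<in> Y} \<le> e" and e: "0 \<le> e" and xs: "set xs \<subseteq> V"
  shows "1 - real (length xs) * e \<le> (\<Sum>i\<in>{i\<in>{..<n}. set xs \<inter> X i = {}}. c i)"
proof -
  have "measure_pmf.prob \<pi> {Y. set xs \<inter> Y \<noteq> {}} = measure_pmf.prob \<pi> (\<Union>v\<in>set xs. {Y. v \<in> Y})"
    by (rule arg_cong[where f = "measure_pmf.prob \<pi>"]) auto
  also have "\<dots> \<le> (\<Sum>v\<in>set xs. measure_pmf.prob \<pi> {Y. v \<in> Y})"
    by (rule measure_pmf.finite_measure_subadditive_finite) auto
  also have "\<dots> \<le> (\<Sum>v\<in>set xs. e)"
    using hit xs by (intro sum_mono) auto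
  also have "\<dots> = real (card (set xs)) * e"
    by simp
  also have "\<dots> \<le> real (length xs) * e"
    using card_length[of xs] e by (intro mult_right_mono) auto
  finally have meets: "measure_pmf.prob \<pi> {Y. set xs \<inter> Y \<noteq> {}} \<le> real (length xs) * e" .
  have "measure_pmf.prob \<pi> (space (measure_pmf \<pi>) - {Y. set xs \<inter> Y \<noteq> {}})
      = 1 - measure_pmf.prob \<pi> {Y. set xs \<inter> Y \<noteq> {}}"
    by (rule measure_pmf.prob_compl) simp
  moreover have "space (measure_pmf \<pi>) - {Y. set xs \<inter> Y \<noteq> {}} = {Y. set xs \<inter> Y = {}}" by auto
  ultimately have "1 - real (length xs) * e \<le> measure_pmf.prob \<pi> {Y. set xs \<inter> Y = {}}"
    using meets by simp
  also have "\<dots> = (\<Sum>i\<in>{i\<in>{..<n}. set xs \<inter> X i = {}}. pmf \<pi> (X i))"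
    by (rule sum_pmf_enumeration[OF bij, symmetric])
  also have "\<dots> \<le> (\<Sum>i\<in>{i\<in>{..<n}. set xs \<inter> X i = {}}. c i)"
    using c by (intro sum_mono) auto
  finally show ?thesis .
qed

lemma pmf_rational_enumeration:
  fixes \<pi> :: "'a set pmf"
  assumes fin: "finite (set_pmf \<pi>)" and t: "0 < t"
    and hit: "\<forall>v\<in>V. measure_pmf.prob \<pi> {Y. v \<in> Y} \<le> e" and e: "0 \<le> e"
  obtains X :: "nat \<Rightarrow> 'a set" and n :: nat and c :: "nat \<Rightarrow> rat"
  where "bij_betw X {..<n} (set_pmf \<pi>)" "\<forall>i<n. 0 < c i" "(\<Sum>i<n. real_of_rat (c i)) \<le> 1 + t"
    and "\<forall>xs. set xs \<subseteq> V \<longrightarrow>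
      1 - real (length xs) * e \<le> (\<Sum>i\<in>{i\<in>{..<n}. set xs \<inter> X i = {}}. real_of_rat (c i))"
proof -
  obtain X where bij: "bij_betw X {..<card (set_pmf \<pi>)} (set_pmf \<pi>)"
    using ex_bij_betw_nat_finite[OF fin] unfolding atLeast0LessThan by blast
  obtain c where c_pmf: "\<forall>i. pmf \<pi> (X i) < real_of_rat (c i)"
    and c_sum: "(\<Sum>i<card (set_pmf \<pi>). real_of_rat (c i)) \<le> 1 + t"
    using rational_weights_above_pmf[OF bij t] .
  show ?thesis
  proof (rule that[OF bij _ c_sum])
    have "0 < real_of_rat (c i)" for i
      using c_pmf[rule_format, of i] pmf_nonneg[of \<pi> "X i"] by linarith
    then show "\<forall>i<card (set_pmf \<pi>). 0 < c i" by simp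
  next
    show "\<forall>xs. set xs \<subseteq> V \<longrightarrow> 1 - real (length xs) * e
        \<le> (\<Sum>i\<in>{i\<in>{..<card (set_pmf \<pi>)}. set xs \<inter> X i = {}}. real_of_rat (c i))"
      using c_pmf by (intro allI impI weight_avoiding_tuple[OF bij _ hit e]) (simp_all add: less_imp_le)
  qed
qed

lemma exists_rat_mult_le:
  fixes t :: real
  assumes "0 < t"
  obtains d :: rat where "0 < d" "real_of_rat d * real N \<le> t"
proof -
  obtain d :: rat where d: "0 < real_of_rat d" "real_of_rat d < t / (real N + 1)"
    using of_rat_dense[of 0 "t / (real N + 1)"] assms by force
  then have "real_of_rat d * real N \<le> t / (real N + 1) * real N"
    by (intro mult_right_mono) auto
  also have "\<dots> \<le> t" using assms by (simp add: field_simps)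
  finally show ?thesis using that d(1) by simp
qed

lemma approximation_parameters:
  fixes \<epsilon> :: real and r :: nat
  assumes \<epsilon>: "0 < \<epsilon>"
  obtains e t where "0 < e" "e < 1" "1 \<le> (1 + \<epsilon>) * (1 - real r * e)"
    and "0 < t" "(1 + t) * (1 + t) \<le> 1 + \<epsilon>"
proof
  define e where "e = \<epsilon> / ((1 + \<epsilon>) * (real r + 1))"
  show "0 < e" using \<epsilon> by (simp add: e_def)
  have "1 + \<epsilon> \<le> (1 + \<epsilon>) * (real r + 1)"
    using mult_left_mono[of 1 "real r + 1" "1 + \<epsilon>"] \<epsilon> by simp
  then have "\<epsilon> < (1 + \<epsilon>) * (real r + 1)" by linarith
  then show "e < 1"
    unfolding e_def using \<epsilon> by (subst divide_less_eq_1_pos) auto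
  have "(1 + \<epsilon>) * (real r * e) = \<epsilon> * (real r / (real r + 1))"
    using \<epsilon> by (simp add: e_def)
  also have "\<dots> \<le> \<epsilon>" using \<epsilon> by (intro mult_left_le) auto
  finally show "1 \<le> (1 + \<epsilon>) * (1 - real r * e)" by (simp add: algebra_simps)
  define t where "t = min 1 (\<epsilon> / 3)"
  show "0 < t" using \<epsilon> by (simp add: t_def)
  have "t \<le> 1" "t \<le> \<epsilon> / 3" by (simp_all add: t_def)
  moreover from this have "t * t \<le> t * 1" using \<open>0 < t\<close> by (intro mult_left_mono) auto
  moreover have "(1 + t) * (1 + t) = 1 + 2 * t + t * t" by (simp add: algebra_simps)
  ultimately show "(1 + t) * (1 + t) \<le> 1 + \<epsilon>" by linarith
qed

context max_on_disj_union
begin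

lemma approximation_by_deletion_mixture:
  fixes A :: "'s vstruct" and \<pi> :: "nat set pmf"
  assumes A: "is_struct A" and arity: "\<forall>f\<in>syms A. ar A f \<le> r" and \<epsilon>: "0 < \<epsilon>"
    and e: "0 \<le> e" "e < 1" "1 \<le> (1 + \<epsilon>) * (1 - real r * e)"
    and t: "0 < t" "(1 + t) * (1 + t) \<le> 1 + \<epsilon>"
    and support: "\<forall>Y\<in>set_pmf \<pi>. Y \<subseteq> sdom A \<and> p (del_vertices (gaifman A) Y) \<le> k"
    and hit: "\<forall>v\<in>sdom A. measure_pmf.prob \<pi> {Y. v \<in> Y} \<le> e"
  shows "\<exists>B. is_struct B \<and> same_sig B A \<and> p (gaifman B) \<le> k \<and> d_opt A B \<le> ereal \<epsilon>"
proof -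
  have "set_pmf \<pi> \<subseteq> Pow (sdom A)" and "finite (sdom A)"
    using support A by (auto simp: is_struct_def)
  then have "finite (set_pmf \<pi>)" by (rule finite_subset[OF _ finite_Pow_iff[THEN iffD2]])
  obtain X and n :: nat and c where bij: "bij_betw X {..<n} (set_pmf \<pi>)" and c_pos: "\<forall>i<n. 0 < c i"
    and c_sum: "(\<Sum>i<n. real_of_rat (c i)) \<le> 1 + t"
    and weight: "\<forall>xs. set xs \<subseteq> sdom A \<longrightarrow>
      1 - real (length xs) * e \<le> (\<Sum>i\<in>{i\<in>{..<n}. set xs \<inter> X i = {}}. real_of_rat (c i))"
    using pmf_rational_enumeration[OF \<open>finite (set_pmf \<pi>)\<close> t(1) hit e(1)] .
  obtain d where d: "0 < d" "real_of_rat d * real (num_tuples A) \<le> t"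
    using exists_rat_mult_le[OF t(1)] .
  have avoid: "\<forall>f\<in>syms A. \<forall>xs\<in>tuples (sdom A) (ar A f).
      1 - real r * e \<le> (\<Sum>i\<in>{i\<in>{..<n}. set xs \<inter> X i = {}}. real_of_rat (c i))"
  proof (intro ballI)
    fix f xs assume "f \<in> syms A" "xs \<in> tuples (sdom A) (ar A f)"
    then have "set xs \<subseteq> sdom A" "real (length xs) * e \<le> real r * e"
      using arity e(1) by (auto simp: tuples_def intro: mult_right_mono)
    then show "1 - real r * e \<le> (\<Sum>i\<in>{i\<in>{..<n}. set xs \<inter> X i = {}}. real_of_rat (c i))"
      using weight by fastforce
  qed
  obtain v where v: "v \<in> sdom A" using A by (auto simp: is_struct_def)
  have "0 < (\<Sum>i\<in>{i\<in>{..<n}. v \<notin> X i}. real_of_rat (c i))"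
    using weight[rule_format, of "[v]"] v e(2) by simp
  then have "{i\<in>{..<n}. v \<notin> X i} \<noteq> {}" by (metis less_irrefl sum.empty)
  then have kept_vertex: "\<exists>i<n. \<not> sdom A \<subseteq> X i" using v by blast
  have k: "\<forall>i<n. p (del_vertices (gaifman A) (X i)) \<le> k"
    using support bij_betw_apply[OF bij] by blast
  show ?thesis
  proof (intro exI conjI)
    show "is_struct (deletion_mixture A n X c d)"
      by (rule is_struct_deletion_mixture[OF A _ _ kept_vertex]) (use c_pos d(1) in auto)
    show "same_sig (deletion_mixture A n X c d) A" by (simp add: same_sig_def)
    show "p (gaifman (deletion_mixture A n X c d)) \<le> k"
      using kept_vertex by (intro gaifman_deletion_mixture_le[OF A c_pos d(1) _ k]) auto
    show "d_opt A (deletion_mixture A n X c d) \<le> ereal \<epsilon>"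
      using c_pos d t(1)
      by (intro d_opt_deletion_mixture_le[OF A \<epsilon> _ t(2) _ c_sum _ d(2) avoid e(3)]) (simp_all add: less_imp_le)
  qed
qed

end

theorem lemma19:
  fixes p :: "graph \<Rightarrow> nat" and \<A> :: "'s vstruct set" and r :: nat
  assumes p_iso: "\<And>G H. wf_graph G \<Longrightarrow> wf_graph H \<Longrightarrow> graph_iso G H \<Longrightarrow> p G = p H"
    and p_union: "\<And>G H. wf_graph G \<Longrightarrow> wf_graph H \<Longrightarrow> p (disj_union G H) = max (p G) (p H)"
    and structs: "\<forall>A\<in>\<A>. is_struct A"
    and arity: "\<forall>A\<in>\<A>. \<forall>f\<in>syms A. ar A f \<le> r"
    and fragile: "frac_fragile p (gaifman ` \<A>)"
  shows "pliable p \<A>"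
proof -
  interpret max_on_disj_union p
    using p_iso p_union by unfold_locales
  show ?thesis
    unfolding pliable_def
  proof (intro allI impI)
    fix \<epsilon> :: real assume \<epsilon>: "0 < \<epsilon>"
    obtain e t where e: "0 < e" "e < 1" "1 \<le> (1 + \<epsilon>) * (1 - real r * e)"
      and t: "0 < t" "(1 + t) * (1 + t) \<le> 1 + \<epsilon>"
      using approximation_parameters[OF \<epsilon>] .
    obtain k where k: "\<forall>G\<in>gaifman ` \<A>. \<exists>\<pi> :: nat set pmf.
        (\<forall>Y\<in>set_pmf \<pi>. Y \<subseteq> fst G \<and> p (del_vertices G Y) \<le> k) \<and>
        (\<forall>v\<in>fst G. measure_pmf.prob \<pi> {Y. v \<in> Y} \<le> e)"
      using fragile[unfolded frac_fragile_def, rule_format, OF e(1)] by (elim exE) (rule that)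
    show "\<exists>k. \<forall>A\<in>\<A>. \<exists>B. is_struct B \<and> same_sig B A \<and> p (gaifman B) \<le> k \<and> d_opt A B \<le> ereal \<epsilon>"
    proof (rule exI[of _ k], intro ballI)
      fix A assume A: "A \<in> \<A>"
      then obtain \<pi> :: "nat set pmf" where
        "\<forall>Y\<in>set_pmf \<pi>. Y \<subseteq> sdom A \<and> p (del_vertices (gaifman A) Y) \<le> k"
        "\<forall>v\<in>sdom A. measure_pmf.prob \<pi> {Y. v \<in> Y} \<le> e"
        using k by (auto simp: gaifman_def)
      then show "\<exists>B. is_struct B \<and> same_sig B A \<and> p (gaifman B) \<le> k \<and> d_opt A B \<le> ereal \<epsilon>"
        using structs arity A e t \<epsilon>
        by (intro approximation_by_deletion_mixture[where r = r]) auto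
    qed
  qed
qed

end
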